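(* Let $\alpha_0\in\mathbb R$. Let $M,K$ be the $5\times5$ matrices $$M=\begin{pmatrix}0&\frac12&-\frac12&0&0\\-\frac12&0&0&0&0\\\frac12&0&0&0&0\\0&0&0&0&0\\0&0&0&0&0\end{pmatrix},\quad K=\begin{pmatrix}0&0&0&-1&0\\0&0&0&0&1\\0&0&0&0&0\\1&0&0&0&0\\0&-1&0&0&0\end{pmatrix},$$ let $S(\mathbf z)=-wu-\frac{u^3}{2}-\frac{u\rho^2}{2}+\rho v$ for $\mathbf z=(u,\phi,\rho,v,w)^T$, let $A$ be the $5\times5$ matrix whose only nonzero entries are $A_{12}=A_{21}=\alpha_0$, and $B=0$. Let $\mathbf z_h=(u_h,\phi_h,\rho_h,v_h,w_h)^T$ be continuously differentiable in $t$ with values in $(V_h)^5$ and satisfy, for every $j$ and every $\boldsymbol\varphi\in(V_h)^5$, $$\int_{I_j}M\partial_t\mathbf z_h\cdot\boldsymbol\varphi\,dx-\int_{I_j}K\mathbf z_h\cdot\partial_x\boldsymbol\varphi\,dx+\big(\widehat{K\mathbf z_h}\cdot\boldsymbol\varphi^-\big)_{j+\frac12}-\big(\widehat{K\mathbf z_h}\cdot\boldsymbol\varphi^+\big)_{j-\frac12}=\int_{I_j}\nabla_{\mathbf z}S(\mathbf z_h)\cdot\boldsymbol\varphi\,dx,$$ with $\widehat{K\mathbf z_h}=K\{\mathbf z_h\}+A[\mathbf z_h]$ at each interface (equivalently, fluxes $\widehat{v_h}=\{v_h\}-\alpha_0[\phi_h]$, $\widehat{w_h}=\{w_h\}+\alpha_0[u_h]$,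 $\widehat{u_h}=\{u_h\}$, $\widehat{\phi_h}=\{\phi_h\}$). Then the discrete energy $$\mathcal E_h=-\frac12\int_\Omega u_h\big(u_h^2+\rho_h^2\big)dx+\alpha_0\sum_j\big([u_h][\phi_h]\big)_{j+\frac12}$$ is constant in time.
   Context: This is a DG discretization of the Camassa–Holm equation $u_t-u_{xxt}+3uu_x-2u_xu_{xx}-uu_{xxx}=0$ in the multi-symplectic form $M\mathbf z_t+K\mathbf z_x=\nabla_{\mathbf z}S(\mathbf z)$ above. Mesh and spaces: a one-dimensional domain $\Omega$ is partitioned into cells $I_j=[x_{j-1/2},x_{j+1/2}]$, $j=1,\dots,N$, with periodic boundary conditions (interface indices modulo $N$). For fixed $k\ge0$, $V_h=\{v\in L^2(\Omega): v|_{I_j}\text{ is a polynomial of degree}\le k\ \forall j\}$. For vector functions in $(V_h)^5$, superscripts $\pm$ at $x_{j+1/2}$ denote right/left limits, $\{\mathbf v\}=\frac12(\mathbf v^++\mathbf v^-)$, $[\mathbf v]=\mathbf v^+-\mathbf v^-$; subscript $j\pm\frac12$ denotes evaluation at $x_{j\pm1/2}$. *)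

theory Defs
  imports "HOL-Analysis.Analysis" "HOL-Computational_Algebra.Polynomial"
begin

text \<open>Components of z = (u, phi, rho, v, w) are indexed 0,1,2,3,4.
  Vectors in R^5 are functions nat => real (only indices < 5 matter),
  5x5 matrices are functions nat => nat => real.\<close>

definition dot5 :: "(nat \<Rightarrow> real) \<Rightarrow> (nat \<Rightarrow> real) \<Rightarrow> real" where
  "dot5 a b = (\<Sum>i<5. a i * b i)"

definition matvec5 :: "(nat \<Rightarrow> nat \<Rightarrow> real) \<Rightarrow> (nat \<Rightarrow> real) \<Rightarrow> nat \<Rightarrow> real" where
  "matvec5 P a = (\<lambda>i. \<Sum>j<5. P i j * a j)"

definition Mmat :: "nat \<Rightarrow> nat \<Rightarrow> real" where
  "Mmat i j = (if (i, j) = (0, 1) then 1/2 else if (i, j) = (0, 2) then -1/2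
     else if (i, j) = (1, 0) then -1/2 else if (i, j) = (2, 0) then 1/2 else 0)"

definition Kmat :: "nat \<Rightarrow> nat \<Rightarrow> real" where
  "Kmat i j = (if (i, j) = (0, 3) then -1 else if (i, j) = (1, 4) then 1
     else if (i, j) = (3, 0) then 1 else if (i, j) = (4, 1) then -1 else 0)"

definition Amat :: "real \<Rightarrow> nat \<Rightarrow> nat \<Rightarrow> real" where
  "Amat \<alpha>0 i j = (if (i, j) = (0, 1) \<or> (i, j) = (1, 0) then \<alpha>0 else 0)"

definition Sfun :: "(nat \<Rightarrow> real) \<Rightarrow> real" where
  "Sfun z = - z 4 * z 0 - z 0 ^ 3 / 2 - z 0 * z 2 ^ 2 / 2 + z 2 * z 3"

definition gradS :: "(nat \<Rightarrow> real) \<Rightarrow> nat \<Rightarrow> real" where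
  "gradS z i = deriv (\<lambda>s. Sfun (z(i := s))) (z i)"

text \<open>Mesh: interface points xs 0 < xs 1 < ... < xs N; cell j (j = 0..N-1) is
  [xs j, xs (j+1)].  Interface i (i = 0..N-1) is the right endpoint xs (i+1) of
  cell i; with periodic boundary conditions, its right neighbour is cell (i+1) mod N,
  whose left endpoint is xs ((i+1) mod N).
  A function of (V_h)^5 is given by zz :: nat => nat => real poly,
  zz c j = component c on cell j.\<close>

definition lim_left :: "(nat \<Rightarrow> real) \<Rightarrow> (nat \<Rightarrow> real poly) \<Rightarrow> nat \<Rightarrow> real" where
  "lim_left xs p i = poly (p i) (xs (Suc i))"

definition lim_right :: "nat \<Rightarrow> (nat \<Rightarrow> real) \<Rightarrow> (nat \<Rightarrow> real poly) \<Rightarrow> nat \<Rightarrow> real" where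
  "lim_right N xs p i = poly (p (Suc i mod N)) (xs (Suc i mod N))"

definition avg_at :: "nat \<Rightarrow> (nat \<Rightarrow> real) \<Rightarrow> (nat \<Rightarrow> real poly) \<Rightarrow> nat \<Rightarrow> real" where
  "avg_at N xs p i = (lim_right N xs p i + lim_left xs p i) / 2"

definition jump_at :: "nat \<Rightarrow> (nat \<Rightarrow> real) \<Rightarrow> (nat \<Rightarrow> real poly) \<Rightarrow> nat \<Rightarrow> real" where
  "jump_at N xs p i = lim_right N xs p i - lim_left xs p i"

definition flux :: "real \<Rightarrow> nat \<Rightarrow> (nat \<Rightarrow> real) \<Rightarrow> (nat \<Rightarrow> nat \<Rightarrow> real poly) \<Rightarrow> nat \<Rightarrow> nat \<Rightarrow> real" where
  "flux \<alpha>0 N xs zz i =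
     (\<lambda>c. matvec5 Kmat (\<lambda>d. avg_at N xs (zz d) i) c + matvec5 (Amat \<alpha>0) (\<lambda>d. jump_at N xs (zz d) i) c)"

definition dg_cell_eq ::
  "real \<Rightarrow> nat \<Rightarrow> (nat \<Rightarrow> real) \<Rightarrow> (nat \<Rightarrow> nat \<Rightarrow> real poly) \<Rightarrow> (nat \<Rightarrow> nat \<Rightarrow> real poly)
     \<Rightarrow> nat \<Rightarrow> (nat \<Rightarrow> real poly) \<Rightarrow> bool" where
  "dg_cell_eq \<alpha>0 N xs zz zt j q \<longleftrightarrow>
     integral {xs j..xs (Suc j)}
       (\<lambda>y. dot5 (matvec5 Mmat (\<lambda>d. poly (zt d j) y)) (\<lambda>c. poly (q c) y))
     - integral {xs j..xs (Suc j)}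
       (\<lambda>y. dot5 (matvec5 Kmat (\<lambda>d. poly (zz d j) y)) (\<lambda>c. poly (pderiv (q c)) y))
     + dot5 (flux \<alpha>0 N xs zz j) (\<lambda>c. poly (q c) (xs (Suc j)))
     - dot5 (flux \<alpha>0 N xs zz ((j + N - 1) mod N)) (\<lambda>c. poly (q c) (xs j))
     = integral {xs j..xs (Suc j)}
       (\<lambda>y. dot5 (gradS (\<lambda>d. poly (zz d j) y)) (\<lambda>c. poly (q c) y))"

definition energy :: "real \<Rightarrow> nat \<Rightarrow> (nat \<Rightarrow> real) \<Rightarrow> (nat \<Rightarrow> nat \<Rightarrow> real poly) \<Rightarrow> real" where
  "energy \<alpha>0 N xs zz =
     - 1/2 * (\<Sum>j<N. integral {xs j..xs (Suc j)}
        (\<lambda>y. poly (zz 0 j) y * (poly (zz 0 j) y ^ 2 + poly (zz 2 j) y ^ 2)))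
     + \<alpha>0 * (\<Sum>i<N. jump_at N xs (zz 0) i * jump_at N xs (zz 1) i)"

end

theory Submission
  imports Defs
begin

(* Testing the scheme on a cell with (u_t, phi_t, rho_t, 0, 0) removes the mass term, as M is
   skew-symmetric. Rows 3 and 4 of the scheme contain no time derivative, so they may be
   differentiated in time and then tested with (v, w). Subtracting the two identities, the volume
   terms become -1/2 d/dt of the integral of u (u^2 + rho^2) plus the exact derivative of
   v u_t - w phi_t, so each cell contributes only boundary terms. Summed over the periodic mesh
   they become interface jumps, where [a b] = {a}[b] + [a]{b} cancels the central fluxes and the
   penalty terms add up to -alpha0 d/dt [u][phi]. *)

lemma sum_lessThan_5: "(\<Sum>i<(5::nat). f i) = f 0 + f 1 + f 2 + f 3 + (f 4 :: 'a::comm_monoid_add)"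
  by (simp add: eval_nat_numeral)

definition poly_integral :: "real \<Rightarrow> real \<Rightarrow> real poly \<Rightarrow> real" where
  "poly_integral a b p = integral {a..b} (poly p)"

lemma poly_integrable_on: "poly p integrable_on {a..b}" for p :: "real poly"
  by (intro integrable_continuous_interval continuous_intros)

lemma integral_eq_poly_integral: "(\<And>y. f y = poly p y) \<Longrightarrow> integral {a..b} f = poly_integral a b p"
  unfolding poly_integral_def by (rule arg_cong[where f = "integral {a..b}"]) auto

lemma poly_integral_add [simp]: "poly_integral a b (p + q) = poly_integral a b p + poly_integral a b q"
  unfolding poly_integral_def poly_add by (simp add: integral_add poly_integrable_on)

lemma poly_integral_diff [simp]: "poly_integral a b (p - q) = poly_integral a b p - poly_integral a b q"
  unfolding poly_integral_def poly_diff by (simp add: integral_diff poly_integrable_on)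

lemma poly_integral_smult [simp]: "poly_integral a b (smult c p) = c * poly_integral a b p"
  unfolding poly_integral_def poly_smult by simp

lemma poly_integral_pderiv:
  assumes "a \<le> b" shows "poly_integral a b (pderiv p) = poly p b - poly p a"
  unfolding poly_integral_def
  by (intro integral_unique fundamental_theorem_of_calculus assms)
     (auto simp: has_real_derivative_iff_has_vector_derivative[symmetric]
        intro: DERIV_subset[OF poly_DERIV])

lemma poly_eq_sum_coeff:
  fixes p :: "'a::comm_semiring_1 poly"
  assumes "degree p \<le> n" shows "poly p x = (\<Sum>i\<le>n. coeff p i * x ^ i)"
  unfolding poly_altdef by (rule sum.mono_neutral_left) (use assms in \<open>auto simp: coeff_eq_0\<close>)

lemma poly_integral_eq_sum_coeff:
  assumes "degree p \<le> n"
  shows "poly_integral a b p = (\<Sum>i\<le>n. coeff p i * integral {a..b} (\<lambda>y. y ^ i))"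
proof -
  have "poly p = (\<lambda>y. \<Sum>i\<le>n. coeff p i * y ^ i)"
    using poly_eq_sum_coeff[OF assms] by blast
  then have "poly_integral a b p = integral {a..b} (\<lambda>y. \<Sum>i\<le>n. coeff p i * y ^ i)"
    by (simp add: poly_integral_def)
  also have "\<dots> = (\<Sum>i\<le>n. integral {a..b} (\<lambda>y. coeff p i * y ^ i))"
    by (intro integral_sum finite_atMost integrable_continuous_interval continuous_on_mult
        continuous_on_const continuous_on_power continuous_on_id)
  also have "\<dots> = (\<Sum>i\<le>n. coeff p i * integral {a..b} (\<lambda>y. y ^ i))"
    by simp
  finally show ?thesis .
qed

(* A uniform degree bound makes evaluation and integration finite linear combinations of the
   coefficients, which is how they inherit the coefficientwise derivative. *)
definition has_poly_derivative :: "(real \<Rightarrow> real poly) \<Rightarrow> real poly \<Rightarrow> real \<Rightarrow> real set \<Rightarrow> bool" where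
  "has_poly_derivative P P' t T \<longleftrightarrow> (\<exists>n. (\<forall>s\<in>T. degree (P s) \<le> n) \<and> degree P' \<le> n \<and>
     (\<forall>i. ((\<lambda>s. coeff (P s) i) has_real_derivative coeff P' i) (at t within T)))"

lemma has_poly_derivative_const: "has_poly_derivative (\<lambda>s. p) 0 t T"
  unfolding has_poly_derivative_def by (rule exI[of _ "degree p"]) auto

lemma has_poly_derivative_add:
  assumes "has_poly_derivative P P' t T" "has_poly_derivative Q Q' t T"
  shows "has_poly_derivative (\<lambda>s. P s + Q s) (P' + Q') t T"
proof -
  obtain n m where "\<forall>s\<in>T. degree (P s) \<le> n" "degree P' \<le> n"
    "\<forall>i. ((\<lambda>s. coeff (P s) i) has_real_derivative coeff P' i) (at t within T)"
    "\<forall>s\<in>T. degree (Q s) \<le> m" "degree Q' \<le> m"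
    "\<forall>i. ((\<lambda>s. coeff (Q s) i) has_real_derivative coeff Q' i) (at t within T)"
    using assms unfolding has_poly_derivative_def by blast
  then show ?thesis
    unfolding has_poly_derivative_def
    by (intro exI[of _ "max n m"])
       (auto intro!: derivative_eq_intros order.trans[OF degree_add_le_max] simp: le_max_iff_disj)
qed

lemma has_poly_derivative_mult:
  assumes "t \<in> T" "has_poly_derivative P P' t T" "has_poly_derivative Q Q' t T"
  shows "has_poly_derivative (\<lambda>s. P s * Q s) (P' * Q t + P t * Q') t T"
proof -
  obtain n m where n: "\<forall>s\<in>T. degree (P s) \<le> n" "degree P' \<le> n"
    "\<forall>i. ((\<lambda>s. coeff (P s) i) has_real_derivative coeff P' i) (at t within T)"
    and m: "\<forall>s\<in>T. degree (Q s) \<le> m" "degree Q' \<le> m"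
    "\<forall>i. ((\<lambda>s. coeff (Q s) i) has_real_derivative coeff Q' i) (at t within T)"
    using assms(2,3) unfolding has_poly_derivative_def by blast
  have "degree (P s * Q s) \<le> n + m" if "s \<in> T" for s
    using n(1) m(1) that by (meson add_mono degree_mult_le order.trans)
  moreover have "degree (P' * Q t + P t * Q') \<le> n + m"
    using n m assms(1) by (intro degree_add_le; meson add_mono degree_mult_le order.trans)
  moreover have "((\<lambda>s. coeff (P s * Q s) i) has_real_derivative coeff (P' * Q t + P t * Q') i)
      (at t within T)" for i
    unfolding coeff_mult coeff_add sum.distrib[symmetric]
    using n(3) m(3) by (auto intro!: derivative_eq_intros sum.cong simp: algebra_simps)
  ultimately show ?thesis
    unfolding has_poly_derivative_def by blast
qed

lemma has_real_derivative_coeff_linear: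
  assumes "t \<in> T" "has_poly_derivative P P' t T"
    and L: "\<And>p n. degree p \<le> n \<Longrightarrow> L p = (\<Sum>i\<le>n. coeff p i * c i)"
  shows "((\<lambda>s. L (P s)) has_real_derivative L P') (at t within T)"
proof -
  obtain n where n: "\<forall>s\<in>T. degree (P s) \<le> n" "degree P' \<le> n"
    "\<forall>i. ((\<lambda>s. coeff (P s) i) has_real_derivative coeff P' i) (at t within T)"
    using assms(2) unfolding has_poly_derivative_def by blast
  have "((\<lambda>s. \<Sum>i\<le>n. coeff (P s) i * c i) has_real_derivative L P') (at t within T)"
    unfolding L[OF n(2)] using n(3) by (auto intro!: derivative_eq_intros)
  then show ?thesis
    by (rule has_field_derivative_transform_within[where d=1]) (use assms(1) n(1) L in auto)
qed

lemma has_real_derivative_poly: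
  "t \<in> T \<Longrightarrow> has_poly_derivative P P' t T \<Longrightarrow>
    ((\<lambda>s. poly (P s) x) has_real_derivative poly P' x) (at t within T)"
  by (rule has_real_derivative_coeff_linear[where c = "\<lambda>i. x ^ i"]) (auto simp: poly_eq_sum_coeff)

lemma has_real_derivative_poly_integral:
  "t \<in> T \<Longrightarrow> has_poly_derivative P P' t T \<Longrightarrow>
    ((\<lambda>s. poly_integral a b (P s)) has_real_derivative poly_integral a b P') (at t within T)"
  by (rule has_real_derivative_coeff_linear[where c = "\<lambda>i. integral {a..b} (\<lambda>y. y ^ i)"])
     (auto simp: poly_integral_eq_sum_coeff)

lemma has_real_derivative_vanishing:
  fixes f :: "real \<Rightarrow> real"
  assumes "a < b" "t \<in> {a..b}" "\<And>s. s \<in> {a..b} \<Longrightarrow> f s = 0"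
    and "(f has_real_derivative D) (at t within {a..b})"
  shows "D = 0"
proof -
  have "(f has_real_derivative 0) (at t within {a..b})"
    by (rule has_field_derivative_transform_within[where f="\<lambda>_. 0" and d=1]) (use assms in auto)
  then show ?thesis
    using vector_derivative_unique_within_closed_interval[of a b t f D 0] assms
    by (simp add: has_real_derivative_iff_has_vector_derivative)
qed

lemma sum_cyclic_reindex:
  assumes "N \<ge> (1::nat)"
  shows "(\<Sum>j<N. h ((j + N - 1) mod N) j) = (\<Sum>i<N. h i (Suc i mod N))"
proof -
  have "(Suc i mod N + N - 1) mod N = i" if "i < N" for i
    using that by (cases "Suc i = N") (auto simp: mod_if)
  moreover have "Suc ((j + N - 1) mod N) mod N = j" if "j < N" for j
    using that assms by (cases j) (auto simp: mod_if)
  ultimately show ?thesis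
    by (intro sum.reindex_bij_witness[of _ "\<lambda>i. Suc i mod N" "\<lambda>j. (j + N - 1) mod N"])
       (use assms in auto)
qed

lemma gradS_components:
  "gradS z 0 = - z 4 - 3/2 * z 0 ^ 2 - z 2 ^ 2 / 2" "gradS z 1 = 0"
  "gradS z 2 = z 3 - z 0 * z 2" "gradS z 3 = z 2" "gradS z 4 = - z 0"
  unfolding gradS_def Sfun_def
  by (auto intro!: DERIV_imp_deriv derivative_eq_intros simp: power2_eq_square)

lemma dot5_gradS:
  "dot5 (gradS z) a = (- z 4 - 3/2 * z 0 ^ 2 - z 2 ^ 2 / 2) * a 0 + (z 3 - z 0 * z 2) * a 2
     + z 2 * a 3 - z 0 * a 4"
  unfolding dot5_def sum_lessThan_5 gradS_components by simp

lemma flux_components: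
  "flux \<alpha>0 N xs zz i 0 = - avg_at N xs (zz 3) i + \<alpha>0 * jump_at N xs (zz 1) i"
  "flux \<alpha>0 N xs zz i 1 = avg_at N xs (zz 4) i + \<alpha>0 * jump_at N xs (zz 0) i"
  "flux \<alpha>0 N xs zz i 2 = 0"
  "flux \<alpha>0 N xs zz i 3 = avg_at N xs (zz 0) i"
  "flux \<alpha>0 N xs zz i 4 = - avg_at N xs (zz 1) i"
  by (simp_all add: flux_def matvec5_def Kmat_def Amat_def sum_lessThan_5)

lemma dg_cell_eq_test_time_derivative:
  assumes "dg_cell_eq \<alpha>0 N xs zz zt j (\<lambda>c. if c < 3 then zt c j else 0)"
  shows "poly_integral (xs j) (xs (Suc j)) (zz 3 j * pderiv (zt 0 j) - zz 4 j * pderiv (zt 1 j))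
      + (flux \<alpha>0 N xs zz j 0 * poly (zt 0 j) (xs (Suc j)) + flux \<alpha>0 N xs zz j 1 * poly (zt 1 j) (xs (Suc j)))
      - (flux \<alpha>0 N xs zz ((j + N - 1) mod N) 0 * poly (zt 0 j) (xs j)
         + flux \<alpha>0 N xs zz ((j + N - 1) mod N) 1 * poly (zt 1 j) (xs j))
    = poly_integral (xs j) (xs (Suc j))
        ((- zz 4 j - smult (3/2) (zz 0 j * zz 0 j) - smult (1/2) (zz 2 j * zz 2 j)) * zt 0 j
         + (zz 3 j - zz 0 j * zz 2 j) * zt 2 j)"
proof -
  let ?q = "\<lambda>c. if c < 3 then zt c j else 0"
  have mass: "integral {xs j..xs (Suc j)}
      (\<lambda>y. dot5 (matvec5 Mmat (\<lambda>d. poly (zt d j) y)) (\<lambda>c. poly (?q c) y)) = 0"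
    \<comment> \<open>M is skew-symmetric\<close>
    by (simp add: dot5_def matvec5_def Mmat_def sum_lessThan_5 algebra_simps)
  have stiffness: "integral {xs j..xs (Suc j)}
      (\<lambda>y. dot5 (matvec5 Kmat (\<lambda>d. poly (zz d j) y)) (\<lambda>c. poly (pderiv (?q c)) y))
    = poly_integral (xs j) (xs (Suc j)) (zz 4 j * pderiv (zt 1 j) - zz 3 j * pderiv (zt 0 j))"
    by (rule integral_eq_poly_integral) (simp add: dot5_def matvec5_def Kmat_def sum_lessThan_5)
  have source: "integral {xs j..xs (Suc j)} (\<lambda>y. dot5 (gradS (\<lambda>d. poly (zz d j) y)) (\<lambda>c. poly (?q c) y))
    = poly_integral (xs j) (xs (Suc j))
        ((- zz 4 j - smult (3/2) (zz 0 j * zz 0 j) - smult (1/2) (zz 2 j * zz 2 j)) * zt 0 j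
         + (zz 3 j - zz 0 j * zz 2 j) * zt 2 j)"
    by (rule integral_eq_poly_integral) (simp add: dot5_gradS power2_eq_square algebra_simps)
  have "dot5 (flux \<alpha>0 N xs zz i) (\<lambda>c. poly (?q c) x)
      = flux \<alpha>0 N xs zz i 0 * poly (zt 0 j) x + flux \<alpha>0 N xs zz i 1 * poly (zt 1 j) x" for i x
    by (simp add: dot5_def sum_lessThan_5 flux_components)
  with assms show ?thesis
    unfolding dg_cell_eq_def mass stiffness source by simp
qed

(* Rows 3 and 4 of the scheme tested with g and h. Since M vanishes on these rows, the residual
   involves no time derivative and can be differentiated in time. *)
definition constraint_residual ::
  "nat \<Rightarrow> (nat \<Rightarrow> real) \<Rightarrow> (nat \<Rightarrow> nat \<Rightarrow> real poly) \<Rightarrow> nat \<Rightarrow> real poly \<Rightarrow> real poly \<Rightarrow> real" where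
  "constraint_residual N xs zz j g h =
     poly_integral (xs j) (xs (Suc j)) (zz 1 j * pderiv h - zz 0 j * pderiv g + zz 0 j * h - zz 2 j * g)
     + (avg_at N xs (zz 0) j * poly g (xs (Suc j)) - avg_at N xs (zz 1) j * poly h (xs (Suc j)))
     - (avg_at N xs (zz 0) ((j + N - 1) mod N) * poly g (xs j)
        - avg_at N xs (zz 1) ((j + N - 1) mod N) * poly h (xs j))"

lemma dg_cell_eq_constraint_residual:
  assumes "dg_cell_eq \<alpha>0 N xs zz zt j (\<lambda>c. if c = 3 then g else if c = 4 then h else 0)"
  shows "constraint_residual N xs zz j g h = 0"
proof -
  let ?q = "\<lambda>c. if c = 3 then g else if c = 4 then h else 0"
  have mass: "integral {xs j..xs (Suc j)}
      (\<lambda>y. dot5 (matvec5 Mmat (\<lambda>d. poly (zt d j) y)) (\<lambda>c. poly (?q c) y)) = 0"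
    by (simp add: dot5_def matvec5_def Mmat_def sum_lessThan_5)
  have stiffness: "integral {xs j..xs (Suc j)}
      (\<lambda>y. dot5 (matvec5 Kmat (\<lambda>d. poly (zz d j) y)) (\<lambda>c. poly (pderiv (?q c)) y))
    = poly_integral (xs j) (xs (Suc j)) (zz 0 j * pderiv g - zz 1 j * pderiv h)"
    by (rule integral_eq_poly_integral) (simp add: dot5_def matvec5_def Kmat_def sum_lessThan_5)
  have source: "integral {xs j..xs (Suc j)} (\<lambda>y. dot5 (gradS (\<lambda>d. poly (zz d j) y)) (\<lambda>c. poly (?q c) y))
    = poly_integral (xs j) (xs (Suc j)) (zz 2 j * g - zz 0 j * h)"
    by (rule integral_eq_poly_integral) (simp add: dot5_gradS)
  have "dot5 (flux \<alpha>0 N xs zz i) (\<lambda>c. poly (?q c) x)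
      = avg_at N xs (zz 0) i * poly g x - avg_at N xs (zz 1) i * poly h x" for i x
    by (simp add: dot5_def sum_lessThan_5 flux_components)
  with assms show ?thesis
    unfolding dg_cell_eq_def mass stiffness source constraint_residual_def by simp
qed

definition interface_term ::
  "real \<Rightarrow> nat \<Rightarrow> (nat \<Rightarrow> real) \<Rightarrow> (nat \<Rightarrow> nat \<Rightarrow> real poly) \<Rightarrow> (nat \<Rightarrow> nat \<Rightarrow> real poly)
     \<Rightarrow> nat \<Rightarrow> nat \<Rightarrow> real \<Rightarrow> real" where
  "interface_term \<alpha>0 N xs zz zt i j x =
     flux \<alpha>0 N xs zz i 0 * poly (zt 0 j) x + flux \<alpha>0 N xs zz i 1 * poly (zt 1 j) x
     - (avg_at N xs (zt 0) i * poly (zz 3 j) x - avg_at N xs (zt 1) i * poly (zz 4 j) x)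
     + poly (zz 3 j * zt 0 j - zz 4 j * zt 1 j) x"

lemma cell_energy_identity:
  assumes "xs j \<le> xs (Suc j)"
    and tested: "dg_cell_eq \<alpha>0 N xs zz zt j (\<lambda>c. if c < 3 then zt c j else 0)"
    and constraint: "constraint_residual N xs zt j (zz 3 j) (zz 4 j) = 0"
  shows "- 1/2 * poly_integral (xs j) (xs (Suc j))
      (zt 0 j * (zz 0 j * zz 0 j + zz 2 j * zz 2 j)
       + zz 0 j * (zt 0 j * zz 0 j + zz 0 j * zt 0 j + (zt 2 j * zz 2 j + zz 2 j * zt 2 j)))
    = interface_term \<alpha>0 N xs zz zt j j (xs (Suc j))
      - interface_term \<alpha>0 N xs zz zt ((j + N - 1) mod N) j (xs j)"
proof -
  let ?I = "poly_integral (xs j) (xs (Suc j))"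
  let ?u = "zz 0 j" and ?rho = "zz 2 j" and ?v = "zz 3 j" and ?w = "zz 4 j"
  let ?u' = "zt 0 j" and ?phi' = "zt 1 j" and ?rho' = "zt 2 j"
  let ?D = "?u' * (?u * ?u + ?rho * ?rho) + ?u * (?u' * ?u + ?u * ?u' + (?rho' * ?rho + ?rho * ?rho'))"
  have "smult (- 1/2) ?D
    = ((- ?w - smult (3/2) (?u * ?u) - smult (1/2) (?rho * ?rho)) * ?u' + (?v - ?u * ?rho) * ?rho')
      - (?v * pderiv ?u' - ?w * pderiv ?phi')
      + (?phi' * pderiv ?w - ?u' * pderiv ?v + ?u' * ?w - ?rho' * ?v)
      + pderiv (?v * ?u' - ?w * ?phi')"
    unfolding poly_eq_poly_eq_iff[symmetric]
    by (rule ext) (simp add: pderiv_diff pderiv_mult algebra_simps)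
  then have "- 1/2 * ?I ?D
    = ?I ((- ?w - smult (3/2) (?u * ?u) - smult (1/2) (?rho * ?rho)) * ?u' + (?v - ?u * ?rho) * ?rho')
      - ?I (?v * pderiv ?u' - ?w * pderiv ?phi')
      + ?I (?phi' * pderiv ?w - ?u' * pderiv ?v + ?u' * ?w - ?rho' * ?v)
      + ?I (pderiv (?v * ?u' - ?w * ?phi'))"
    by (metis poly_integral_add poly_integral_diff poly_integral_smult)
  also have "?I (pderiv (?v * ?u' - ?w * ?phi'))
      = poly (?v * ?u' - ?w * ?phi') (xs (Suc j)) - poly (?v * ?u' - ?w * ?phi') (xs j)"
    using assms(1) by (rule poly_integral_pderiv)
  finally show ?thesis
    using dg_cell_eq_test_time_derivative[OF tested] constraint
    unfolding interface_term_def constraint_residual_def by (simp add: algebra_simps)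
qed

lemma interface_term_jump:
  "interface_term \<alpha>0 N xs zz zt i i (xs (Suc i))
     - interface_term \<alpha>0 N xs zz zt i (Suc i mod N) (xs (Suc i mod N))
   = - \<alpha>0 * (jump_at N xs (zt 0) i * jump_at N xs (zz 1) i + jump_at N xs (zt 1) i * jump_at N xs (zz 0) i)"
  unfolding interface_term_def flux_components avg_at_def jump_at_def lim_left_def lim_right_def
  by (simp add: field_simps)

lemma energy_eq_poly_integral:
  "energy \<alpha>0 N xs zz =
     - 1/2 * (\<Sum>j<N. poly_integral (xs j) (xs (Suc j)) (zz 0 j * (zz 0 j * zz 0 j + zz 2 j * zz 2 j)))
     + \<alpha>0 * (\<Sum>i<N. jump_at N xs (zz 0) i * jump_at N xs (zz 1) i)"
  unfolding energy_def
  by (intro arg_cong2[where f = "(+)"] arg_cong2[where f = "(*)"] refl sum.cong integral_eq_poly_integral)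
     (simp add: power2_eq_square)

locale ch_dg_solution =
  fixes \<alpha>0 :: real and N k :: nat and xs :: "nat \<Rightarrow> real" and t0 t1 :: real
    and z zt :: "real \<Rightarrow> nat \<Rightarrow> nat \<Rightarrow> real poly"
  assumes N_pos: "N \<ge> 1"
    and mesh: "\<And>j. j < N \<Longrightarrow> xs j < xs (Suc j)"
    and Vh: "\<And>t c j. t \<in> {t0..t1} \<Longrightarrow> c < 5 \<Longrightarrow> j < N \<Longrightarrow> degree (z t c j) \<le> k"
    and diff: "\<And>t c j i. t \<in> {t0..t1} \<Longrightarrow> c < 5 \<Longrightarrow> j < N \<Longrightarrow>
        ((\<lambda>s. coeff (z s c j) i) has_real_derivative coeff (zt t c j) i) (at t within {t0..t1})"
    and scheme: "\<And>t j q. t \<in> {t0..t1} \<Longrightarrow> j < N \<Longrightarrow> (\<forall>c<5. degree (q c) \<le> k) \<Longrightarrow>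
        dg_cell_eq \<alpha>0 N xs (z t) (zt t) j q"
    and nontrivial_interval: "t0 < t1"
begin

lemma zt_degree:
  assumes "t \<in> {t0..t1}" "c < 5" "j < N"
  shows "degree (zt t c j) \<le> k"
proof (rule degree_le, intro allI impI)
  fix i assume "k < i"
  then have "coeff (z s c j) i = 0" if "s \<in> {t0..t1}" for s
    using Vh[OF that assms(2,3)] by (simp add: coeff_eq_0)
  then show "coeff (zt t c j) i = 0"
    using has_real_derivative_vanishing[OF nontrivial_interval assms(1) _ diff[OF assms]] by blast
qed

lemma has_poly_derivative_z:
  assumes "t \<in> {t0..t1}" "c < 5" "j < N"
  shows "has_poly_derivative (\<lambda>s. z s c j) (zt t c j) t {t0..t1}"
  unfolding has_poly_derivative_def using Vh zt_degree diff assms by blast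

lemma has_real_derivative_poly_z:
  assumes "t \<in> {t0..t1}" "c < 5" "j < N"
  shows "((\<lambda>s. poly (z s c j) x) has_real_derivative poly (zt t c j) x) (at t within {t0..t1})"
  using assms(1) has_poly_derivative_z[OF assms] by (rule has_real_derivative_poly)

lemma has_real_derivative_avg_at:
  assumes "t \<in> {t0..t1}" "c < 5" "i < N"
  shows "((\<lambda>s. avg_at N xs (z s c) i) has_real_derivative avg_at N xs (zt t c) i)
    (at t within {t0..t1})"
  unfolding avg_at_def lim_left_def lim_right_def
  using N_pos by (intro DERIV_cdivide DERIV_add has_real_derivative_poly_z assms) auto

lemma has_real_derivative_jump_at:
  assumes "t \<in> {t0..t1}" "c < 5" "i < N"
  shows "((\<lambda>s. jump_at N xs (z s c) i) has_real_derivative jump_at N xs (zt t c) i)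
    (at t within {t0..t1})"
  unfolding jump_at_def lim_left_def lim_right_def
  using N_pos by (intro DERIV_diff has_real_derivative_poly_z assms) auto

lemma has_real_derivative_poly_integral_z_mult:
  assumes "t \<in> {t0..t1}" "c < 5" "j < N"
  shows "((\<lambda>s. poly_integral a b (z s c j * g)) has_real_derivative poly_integral a b (zt t c j * g))
    (at t within {t0..t1})"
  using has_real_derivative_poly_integral[OF assms(1)
      has_poly_derivative_mult[OF assms(1) has_poly_derivative_z[OF assms] has_poly_derivative_const]]
  by simp

lemma constraint_residual_zt:
  assumes t: "t \<in> {t0..t1}" and j: "j < N" and "degree g \<le> k" "degree h \<le> k"
  shows "constraint_residual N xs (zt t) j g h = 0"
proof (rule has_real_derivative_vanishing[OF nontrivial_interval t])
  show "constraint_residual N xs (z s) j g h = 0" if "s \<in> {t0..t1}" for s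
  proof (rule dg_cell_eq_constraint_residual)
    show "dg_cell_eq \<alpha>0 N xs (z s) (zt s) j (\<lambda>c. if c = 3 then g else if c = 4 then h else 0)"
      using assms by (intro scheme[OF that j]) auto
  qed
  show "((\<lambda>s. constraint_residual N xs (z s) j g h) has_real_derivative
      constraint_residual N xs (zt t) j g h) (at t within {t0..t1})"
    unfolding constraint_residual_def poly_integral_add poly_integral_diff
    using N_pos
    by (intro DERIV_add DERIV_diff DERIV_cmult_right has_real_derivative_poly_integral_z_mult
        has_real_derivative_avg_at t j) auto
qed

lemma energy_has_derivative_0:
  assumes t: "t \<in> {t0..t1}"
  shows "((\<lambda>s. energy \<alpha>0 N xs (z s)) has_real_derivative 0) (at t within {t0..t1})"
proof -
  let ?D = "\<lambda>j. zt t 0 j * (z t 0 j * z t 0 j + z t 2 j * z t 2 j)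
    + z t 0 j * (zt t 0 j * z t 0 j + z t 0 j * zt t 0 j + (zt t 2 j * z t 2 j + z t 2 j * zt t 2 j))"
  let ?G = "interface_term \<alpha>0 N xs (z t) (zt t)"
  let ?J = "\<lambda>i. jump_at N xs (zt t 0) i * jump_at N xs (z t 1) i
    + jump_at N xs (zt t 1) i * jump_at N xs (z t 0) i"
  have cells: "- 1/2 * poly_integral (xs j) (xs (Suc j)) (?D j)
      = ?G j j (xs (Suc j)) - ?G ((j + N - 1) mod N) j (xs j)" if j: "j < N" for j
    using mesh[OF j] zt_degree[OF t _ j] Vh[OF t _ j]
    by (intro cell_energy_identity scheme constraint_residual_zt t j) auto
  have "- 1/2 * (\<Sum>j<N. poly_integral (xs j) (xs (Suc j)) (?D j))
      = (\<Sum>j<N. ?G j j (xs (Suc j)) - ?G ((j + N - 1) mod N) j (xs j))"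
    unfolding sum_distrib_left using cells by (intro sum.cong) auto
  also have "\<dots> = (\<Sum>i<N. ?G i i (xs (Suc i)) - ?G i (Suc i mod N) (xs (Suc i mod N)))"
    unfolding sum_subtractf sum_cyclic_reindex[OF N_pos, of "\<lambda>i j. ?G i j (xs j)"] ..
  also have "\<dots> = - \<alpha>0 * (\<Sum>i<N. ?J i)"
    by (simp add: interface_term_jump sum_distrib_left sum_negf)
  finally have balance:
    "- 1/2 * (\<Sum>j<N. poly_integral (xs j) (xs (Suc j)) (?D j)) + \<alpha>0 * (\<Sum>i<N. ?J i) = 0"
    by simp
  have "((\<lambda>s. - 1/2 * (\<Sum>j<N. poly_integral (xs j) (xs (Suc j))
                             (z s 0 j * (z s 0 j * z s 0 j + z s 2 j * z s 2 j)))
          + \<alpha>0 * (\<Sum>i<N. jump_at N xs (z s 0) i * jump_at N xs (z s 1) i))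
    has_real_derivative
      - 1/2 * (\<Sum>j<N. poly_integral (xs j) (xs (Suc j)) (?D j)) + \<alpha>0 * (\<Sum>i<N. ?J i))
    (at t within {t0..t1})"
    by (intro DERIV_add DERIV_cmult DERIV_sum DERIV_mult has_real_derivative_poly_integral[OF t]
        has_poly_derivative_mult has_poly_derivative_add has_poly_derivative_z
        has_real_derivative_jump_at t) auto
  then show ?thesis
    unfolding energy_eq_poly_integral balance .
qed

lemma energy_constant: "\<forall>t \<in> {t0..t1}. energy \<alpha>0 N xs (z t) = energy \<alpha>0 N xs (z t0)"
proof -
  obtain E where "\<forall>t\<in>{t0..t1}. energy \<alpha>0 N xs (z t) = E"
    using has_field_derivative_zero_constant[OF convex_real_interval(5) energy_has_derivative_0]
    by blast
  moreover have "t0 \<in> {t0..t1}"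
    using nontrivial_interval by simp
  ultimately show ?thesis by simp
qed

end

theorem proposition4p4:
  fixes \<alpha>0 :: real and N k :: nat and xs :: "nat \<Rightarrow> real" and t0 t1 :: real
    and z zt :: "real \<Rightarrow> nat \<Rightarrow> nat \<Rightarrow> real poly"
  assumes N_pos: "N \<ge> 1"
    and mesh: "\<And>j. j < N \<Longrightarrow> xs j < xs (Suc j)"
    and Vh: "\<And>t c j. t \<in> {t0..t1} \<Longrightarrow> c < 5 \<Longrightarrow> j < N \<Longrightarrow> degree (z t c j) \<le> k"
    and diff: "\<And>t c j i. t \<in> {t0..t1} \<Longrightarrow> c < 5 \<Longrightarrow> j < N \<Longrightarrow>
        ((\<lambda>s. coeff (z s c j) i) has_real_derivative coeff (zt t c j) i) (at t within {t0..t1})"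
    and cont: "\<And>c j i. c < 5 \<Longrightarrow> j < N \<Longrightarrow> continuous_on {t0..t1} (\<lambda>t. coeff (zt t c j) i)"
    and scheme: "\<And>t j q. t \<in> {t0..t1} \<Longrightarrow> j < N \<Longrightarrow> (\<forall>c<5. degree (q c) \<le> k) \<Longrightarrow>
        dg_cell_eq \<alpha>0 N xs (z t) (zt t) j q"
  shows "\<forall>t \<in> {t0..t1}. energy \<alpha>0 N xs (z t) = energy \<alpha>0 N xs (z t0)"
proof (cases "t0 < t1")
  case True
  interpret ch_dg_solution \<alpha>0 N k xs t0 t1 z zt
    using N_pos mesh Vh diff scheme True by unfold_locales
  show ?thesis by (rule energy_constant)
next
  case False
  then have "{t0..t1} \<subseteq> {t0}" by auto
  then show ?thesis by auto
qed

end
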